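(* Let $n\ge 3$ and let $\mathcal T$ be an admissible family of arcs with endpoints in $[n]$. Then the vectors $\{e_i-e_j : [i,j)\in\mathcal T\}\subset\mathbb{R}^n$ are affinely independent, and their convex hull is a non-degenerate simplex contained in the boundary of $Root_n$. Consequently, the map $\phi_n:|\mathcal K_n|\to\mathbb{R}^n$ is injective on each simplex and maps each simplex into $\partial(Root_n)$.
   Context: Identify $[n]$ with the vertices of a regular $n$-gon in $S^1$, labelled counterclockwise, with counterclockwise order $\preceq$; for $a\ne b\in[n]$, $[a,b)=\{z\in S^1:a\preceq z\prec b\}$. A finite collection of such arcs is admissible if any two distinct members $I,J$ are either intersecting and strictly nested, or disjoint with the sink of neither equal to the source of the other. $\mathcal K_n$ is the simplicial complex on the $n(n-1)$ arcs $[i,j)$, $i\neq j$, whose simplices are the nonempty admissible families. $\{e_i\}$ is the standard basis of $\mathbb{R}^n$, $Root_n=\mathrm{Conv}\{e_i-e_j:1\le i\ne j\le n\}$, a polytope of dimension $n-1$ in $H_0=\{x:\sum x_i=0\}$; its boundary is taken relative to $H_0$. $\phi_n:|\mathcal K_n|\to\mathbb{R}^n$ is the map that is affine on each simplex and sends the vertex $[i,j)$ to $e_i-e_j$. *)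

theory Defs
  imports "HOL-Analysis.Analysis"
begin

text \<open>The vertex set [n] is the finite type 'n (n = CARD('n)).  The labelling
  lab : 'n -> {0..<n} (a bijection) places vertex v at position lab v on the circle
  S^1, modelled as the half-open real interval [0,n) with its ends identified;
  counterclockwise = increasing position (mod n).  The standard basis vector
  e_v of R^n is axis v 1 in real^'n.\<close>

definition ccw_off :: "real \<Rightarrow> real \<Rightarrow> real \<Rightarrow> real" where
  "ccw_off N x z = (if x \<le> z then z - x else z - x + N)"

text \<open>The arc [i,j) = {z in S^1 : i \<preceq> z \<prec> j}, as a subset of the circle.\<close>
definition arc :: "('n::finite \<Rightarrow> nat) \<Rightarrow> 'n \<times> 'n \<Rightarrow> real set" where
  "arc lab I = {z. 0 \<le> z \<and> z < real CARD('n) \<and>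
      ccw_off (real CARD('n)) (real (lab (fst I))) z
        < ccw_off (real CARD('n)) (real (lab (fst I))) (real (lab (snd I)))}"

definition admissible :: "('n::finite \<Rightarrow> nat) \<Rightarrow> ('n \<times> 'n) set \<Rightarrow> bool" where
  "admissible lab T \<longleftrightarrow> finite T \<and> (\<forall>I\<in>T. fst I \<noteq> snd I) \<and>
     (\<forall>I\<in>T. \<forall>J\<in>T. I \<noteq> J \<longrightarrow>
        (arc lab I \<inter> arc lab J \<noteq> {} \<and> (arc lab I \<subset> arc lab J \<or> arc lab J \<subset> arc lab I))
      \<or> (arc lab I \<inter> arc lab J = {} \<and> snd I \<noteq> fst J \<and> snd J \<noteq> fst I))"

definition root_vec :: "'n::finite \<times> 'n \<Rightarrow> real^'n" where
  "root_vec I = axis (fst I) 1 - axis (snd I) 1"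

definition Root :: "(real^'n::finite) set" where
  "Root = convex hull {axis i 1 - axis j 1 | i j. i \<noteq> j}"

text \<open>Points of the closed geometric simplex of |K_n| spanned by the family T,
  as barycentric weight functions on the vertex set (arcs).\<close>
definition simplex_pts :: "('n::finite \<times> 'n) set \<Rightarrow> ('n \<times> 'n \<Rightarrow> real) set" where
  "simplex_pts T = {w. (\<forall>I. 0 \<le> w I) \<and> (\<forall>I. I \<notin> T \<longrightarrow> w I = 0) \<and> sum w T = 1}"

definition phi :: "('n::finite \<times> 'n \<Rightarrow> real) \<Rightarrow> real^'n" where
  "phi w = (\<Sum>I\<in>{I. fst I \<noteq> snd I}. w I *\<^sub>R root_vec I)"

end

theory Submission
  imports Defs
begin

text \<open>In an admissible family no vertex is both a source and a sink: for \<open>[a,b)\<close> and \<open>[b,c)\<close>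
  the point just before \<open>b\<close> lies only in the first arc and \<open>b\<close> only in the second, so they are
  neither nested nor allowed to be disjoint.  An inclusion-minimal arc has an endpoint used by no
  other arc, so the family is a forest and the vectors \<open>e\<^sub>i - e\<^sub>j\<close> are linearly independent (peel
  off leaves).  Finally, with \<open>S\<close> the set of sources, the functional \<open>x \<mapsto> \<Sum>\<^sub>i\<^sub>\<in>\<^sub>S x\<^sub>i\<close> is at most
  \<open>1\<close> on \<open>Root\<^sub>n\<close>, equal to \<open>1\<close> at every \<open>e\<^sub>i - e\<^sub>j\<close> of the family and \<open>-1\<close> at \<open>e\<^sub>j - e\<^sub>i\<close>, so the
  family spans a simplex inside a proper face.\<close>

lemma root_vec_nth:
  "root_vec I $ v = (if v = fst I then 1 else 0) - (if v = snd I then 1 else (0::real))"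
  by (simp add: root_vec_def axis_def)

lemma root_vec_coeffs_eq_0:
  fixes T :: "('n::finite \<times> 'n) set"
  assumes nondeg: "\<And>I. I \<in> T \<Longrightarrow> fst I \<noteq> snd I"
    and leaf: "\<And>S. S \<subseteq> T \<Longrightarrow> S \<noteq> {} \<Longrightarrow>
      \<exists>I\<in>S. \<exists>v\<in>{fst I, snd I}. \<forall>J\<in>S - {I}. v \<noteq> fst J \<and> v \<noteq> snd J"
    and comb: "(\<Sum>I\<in>T. c I *\<^sub>R root_vec I) = 0"
  shows "\<forall>I\<in>T. c I = 0"
  using finite[of T] nondeg leaf comb
proof (induction T rule: finite_psubset_induct)
  case (psubset T)
  show ?case
  proof (cases "T = {}")
    case False
    then obtain I0 v where I0: "I0 \<in> T" "v \<in> {fst I0, snd I0}"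
      and unshared: "\<forall>J\<in>T - {I0}. v \<noteq> fst J \<and> v \<noteq> snd J"
      using psubset.prems(2) by blast
    have "0 = (\<Sum>J\<in>T. c J *\<^sub>R root_vec J) $ v"
      using psubset.prems(3) by simp
    also have "\<dots> = c I0 * root_vec I0 $ v + (\<Sum>J\<in>T - {I0}. c J * root_vec J $ v)"
      using psubset.hyps(1) I0(1) by (simp add: sum.remove)
    also have "(\<Sum>J\<in>T - {I0}. c J * root_vec J $ v) = 0"
      using unshared by (intro sum.neutral) (auto simp: root_vec_nth)
    finally have "c I0 * root_vec I0 $ v = 0"
      by simp
    moreover have "root_vec I0 $ v \<noteq> 0"
      using I0(2) psubset.prems(1)[OF I0(1)] by (auto simp: root_vec_nth)
    ultimately have c0: "c I0 = 0"
      by simp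
    have "(\<Sum>J\<in>T - {I0}. c J *\<^sub>R root_vec J) = 0"
      using psubset.prems(3) psubset.hyps(1) I0(1) c0 by (simp add: sum.remove)
    moreover have "T - {I0} \<subset> T"
      using I0(1) by blast
    ultimately have "\<forall>I\<in>T - {I0}. c I = 0"
      using psubset.prems(1,2) by (intro psubset.IH) auto
    with c0 show ?thesis by blast
  qed simp
qed

lemma independent_root_vecs:
  fixes T :: "('n::finite \<times> 'n) set"
  assumes coeffs: "\<And>c. (\<Sum>I\<in>T. c I *\<^sub>R root_vec I) = 0 \<Longrightarrow> \<forall>I\<in>T. c I = 0"
  shows "inj_on root_vec T" and "independent (root_vec ` T)"
proof -
  show inj: "inj_on root_vec T"
  proof (rule inj_onI, rule ccontr)
    fix I J assume IJ: "I \<in> T" "J \<in> T" "root_vec I = root_vec J" "I \<noteq> J"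
    let ?c = "\<lambda>K. if K = I then 1 else if K = J then -1 else (0::real)"
    have "(\<Sum>K\<in>T. ?c K *\<^sub>R root_vec K) = (\<Sum>K\<in>{I, J}. ?c K *\<^sub>R root_vec K)"
      using IJ(1,2) by (intro sum.mono_neutral_right) auto
    also have "\<dots> = 0"
      using IJ(3,4) by simp
    finally show False
      using coeffs IJ(1) by fastforce
  qed
  show "independent (root_vec ` T)"
  proof
    assume "dependent (root_vec ` T)"
    then obtain u where u: "\<exists>v\<in>root_vec ` T. u v \<noteq> 0" "(\<Sum>v\<in>root_vec ` T. u v *\<^sub>R v) = 0"
      by (auto simp: real_vector.dependent_finite)
    then have "(\<Sum>I\<in>T. u (root_vec I) *\<^sub>R root_vec I) = 0"
      by (simp add: sum.reindex[OF inj])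
    with u(1) coeffs show False
      by fastforce
  qed
qed

lemma inner_sum_axis_root_vec:
  "(\<Sum>k\<in>S. axis k 1) \<bullet> root_vec I = of_bool (fst I \<in> S) - (of_bool (snd I \<in> S) :: real)"
  by (simp add: root_vec_def inner_sum_left inner_diff_right inner_axis_axis sum.If_cases)

lemma convex_hull_root_vecs_subset_rel_frontier_Root:
  fixes T :: "('n::finite \<times> 'n) set"
  assumes sink_ne_source: "\<And>I J. I \<in> T \<Longrightarrow> J \<in> T \<Longrightarrow> snd I \<noteq> fst J"
  shows "convex hull (root_vec ` T) \<subseteq> rel_frontier Root"
proof (cases "T = {}")
  case False
  then obtain I0 where I0: "I0 \<in> T" by blast
  define S where "S = fst ` T"
  define a :: "real^'n" where "a = (\<Sum>k\<in>S. axis k 1)"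
  define F where "F = Root \<inter> {x. a \<bullet> x = 1}"
  have source_in: "fst I \<in> S" and sink_notin: "snd I \<notin> S" if "I \<in> T" for I
    using that sink_ne_source[OF that] by (auto simp: S_def)
  have Root_eq: "Root = convex hull (root_vec ` {I. fst I \<noteq> snd I})"
  proof -
    have "{axis i 1 - axis j 1 | i j. i \<noteq> j} = root_vec ` {I. fst I \<noteq> snd I}"
      by (auto simp: root_vec_def image_def)
    then show ?thesis unfolding Root_def by (rule arg_cong)
  qed
  have a_le: "a \<bullet> x \<le> 1" if "x \<in> Root" for x
  proof -
    have "root_vec ` {I. fst I \<noteq> snd I} \<subseteq> {x. a \<bullet> x \<le> 1}"
      by (auto simp: a_def inner_sum_axis_root_vec)
    then have "Root \<subseteq> {x. a \<bullet> x \<le> 1}"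
      unfolding Root_eq by (intro hull_minimal) (simp_all add: convex_halfspace_le)
    with that show ?thesis by blast
  qed
  have "F face_of Root"
    unfolding F_def using a_le by (intro face_of_Int_supporting_hyperplane_le) (simp add: Root_eq)
  moreover have "F \<noteq> Root"
  proof -
    let ?x = "root_vec (snd I0, fst I0)"
    have "?x \<in> Root"
      using sink_ne_source[OF I0 I0] unfolding Root_eq by (intro hull_inc) auto
    moreover have "a \<bullet> ?x = -1"
      using source_in[OF I0] sink_notin[OF I0] by (simp add: a_def inner_sum_axis_root_vec)
    ultimately show ?thesis
      unfolding F_def by (metis (mono_tags) IntD2 mem_Collect_eq one_neq_neg_one)
  qed
  ultimately have "F \<subseteq> rel_frontier Root"
    by (rule face_of_subset_rel_frontier)
  moreover have "root_vec ` T \<subseteq> F"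
  proof
    fix x assume "x \<in> root_vec ` T"
    then obtain I where I: "I \<in> T" "x = root_vec I" by blast
    have "x \<in> Root"
      using I sink_ne_source[OF I(1) I(1)] unfolding Root_eq by (intro hull_inc) auto
    moreover have "a \<bullet> x = 1"
      using I source_in[OF I(1)] sink_notin[OF I(1)] by (simp add: a_def inner_sum_axis_root_vec)
    ultimately show "x \<in> F" by (simp add: F_def)
  qed
  then have "convex hull (root_vec ` T) \<subseteq> F"
    unfolding F_def Root_eq by (intro hull_minimal) (simp_all add: convex_Int convex_hyperplane)
  ultimately show ?thesis by blast
qed simp

lemma phi_simplex_pts:
  assumes "\<And>I. I \<in> T \<Longrightarrow> fst I \<noteq> snd I" and "w \<in> simplex_pts T"
  shows "phi w = (\<Sum>I\<in>T. w I *\<^sub>R root_vec I)"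
  unfolding phi_def using assms
  by (intro sum.mono_neutral_right) (auto simp: simplex_pts_def)

lemma phi_simplex_pts_subset_convex_hull:
  assumes "\<And>I. I \<in> T \<Longrightarrow> fst I \<noteq> snd I"
  shows "phi ` simplex_pts T \<subseteq> convex hull (root_vec ` T)"
proof
  fix y assume "y \<in> phi ` simplex_pts T"
  then obtain w where w: "w \<in> simplex_pts T" "y = phi w" by blast
  have "(\<Sum>I\<in>T. w I *\<^sub>R root_vec I) \<in> convex hull (root_vec ` T)"
    using w(1) by (intro convex_sum) (auto simp: simplex_pts_def hull_inc)
  then show "y \<in> convex hull (root_vec ` T)"
    using phi_simplex_pts[OF assms w(1)] w(2) by simp
qed

lemma inj_on_phi_simplex_pts:
  assumes nondeg: "\<And>I. I \<in> T \<Longrightarrow> fst I \<noteq> snd I"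
    and coeffs: "\<And>c. (\<Sum>I\<in>T. c I *\<^sub>R root_vec I) = 0 \<Longrightarrow> \<forall>I\<in>T. c I = 0"
  shows "inj_on phi (simplex_pts T)"
proof (rule inj_onI)
  fix w1 w2 assume w: "w1 \<in> simplex_pts T" "w2 \<in> simplex_pts T" "phi w1 = phi w2"
  then have "(\<Sum>I\<in>T. (w1 I - w2 I) *\<^sub>R root_vec I) = 0"
    by (simp add: phi_simplex_pts[OF nondeg] scaleR_diff_left sum_subtractf)
  then have "\<forall>I\<in>T. w1 I = w2 I"
    using coeffs by fastforce
  moreover have "w1 I = 0 \<and> w2 I = 0" if "I \<notin> T" for I
    using w(1,2) that by (cases I) (simp add: simplex_pts_def)
  ultimately show "w1 = w2"
    by (metis ext)
qed

lemma admissible_subset: "admissible lab T \<Longrightarrow> S \<subseteq> T \<Longrightarrow> admissible lab S"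
  unfolding admissible_def by (meson finite_subset subsetD)

lemma admissible_nondegenerate: "admissible lab T \<Longrightarrow> I \<in> T \<Longrightarrow> fst I \<noteq> snd I"
  unfolding admissible_def by blast

lemma admissible_pairD:
  assumes "admissible lab T" "I \<in> T" "J \<in> T" "I \<noteq> J"
  shows "arc lab I \<inter> arc lab J \<noteq> {} \<and> (arc lab I \<subset> arc lab J \<or> arc lab J \<subset> arc lab I)
      \<or> arc lab I \<inter> arc lab J = {} \<and> snd I \<noteq> fst J \<and> snd J \<noteq> fst I"
  using assms unfolding admissible_def by blast

definition ccw_dist :: "nat \<Rightarrow> nat \<Rightarrow> nat \<Rightarrow> nat" where
  "ccw_dist N a k = (if a \<le> k then k - a else k + N - a)"

locale polygon_labelling =
  fixes lab :: "'n::finite \<Rightarrow> nat"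
  assumes lab_bij: "bij_betw lab UNIV {0..<CARD('n)}"
begin

lemma lab_less: "lab v < CARD('n)"
  using lab_bij by (auto simp: bij_betw_def)

lemma lab_eq_iff: "lab u = lab v \<longleftrightarrow> u = v"
  using lab_bij by (auto simp: bij_betw_def inj_def)

definition prev_lab :: "'n \<Rightarrow> nat" where
  "prev_lab v = (if lab v = 0 then CARD('n) - 1 else lab v - 1)"

lemma prev_lab_less: "prev_lab v < CARD('n)"
  using lab_less[of v] by (auto simp: prev_lab_def)

lemma real_mem_arc_iff:
  assumes "k < CARD('n)"
  shows "real k \<in> arc lab (u, v) \<longleftrightarrow>
    ccw_dist CARD('n) (lab u) k < ccw_dist CARD('n) (lab u) (lab v)"
  using assms lab_less[of u] lab_less[of v]
  by (auto simp: arc_def ccw_off_def ccw_dist_def of_nat_diff)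

lemmas real_lab_mem_arc_iff =
  real_mem_arc_iff[OF lab_less] real_mem_arc_iff[OF prev_lab_less]

lemma source_mem_arc: "u \<noteq> v \<Longrightarrow> real (lab u) \<in> arc lab (u, v)"
  unfolding real_lab_mem_arc_iff using lab_less[of u] lab_eq_iff[of u v]
  by (auto simp: ccw_dist_def)

lemma sink_not_mem_arc: "real (lab v) \<notin> arc lab (u, v)"
  by (simp add: real_lab_mem_arc_iff)

lemma prev_sink_mem_arc: "u \<noteq> v \<Longrightarrow> real (prev_lab v) \<in> arc lab (u, v)"
  unfolding real_lab_mem_arc_iff using lab_less[of u] lab_less[of v] lab_eq_iff[of u v]
  by (auto simp: ccw_dist_def prev_lab_def)

lemma prev_source_not_mem_arc: "real (prev_lab u) \<notin> arc lab (u, v)"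
  unfolding real_lab_mem_arc_iff using lab_less[of u] lab_less[of v]
  by (auto simp: ccw_dist_def prev_lab_def)

lemma prev_mem_arc:
  "real (lab w) \<in> arc lab (u, v) \<Longrightarrow> w \<noteq> u \<Longrightarrow> real (prev_lab w) \<in> arc lab (u, v)"
  unfolding real_lab_mem_arc_iff using lab_less[of u] lab_less[of v] lab_less[of w] lab_eq_iff[of w u]
  by (auto simp: ccw_dist_def prev_lab_def split: if_splits)

lemma mem_arc_of_prev:
  "real (prev_lab w) \<in> arc lab (u, v) \<Longrightarrow> w \<noteq> v \<Longrightarrow> real (lab w) \<in> arc lab (u, v)"
  unfolding real_lab_mem_arc_iff using lab_less[of u] lab_less[of v] lab_less[of w] lab_eq_iff[of w v]
  by (auto simp: ccw_dist_def prev_lab_def split: if_splits)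

lemma admissible_sink_ne_source:
  assumes adm: "admissible lab T" and I: "I \<in> T" and J: "J \<in> T"
  shows "snd I \<noteq> fst J"
proof
  assume eq: "snd I = fst J"
  obtain a b c where IJ: "I = (a, b)" "J = (b, c)"
    using eq by (metis prod.collapse)
  have "a \<noteq> b" "b \<noteq> c"
    using admissible_nondegenerate[OF adm I] admissible_nondegenerate[OF adm J] IJ by auto
  then have "real (prev_lab b) \<in> arc lab I - arc lab J" "real (lab b) \<in> arc lab J - arc lab I"
    using IJ prev_sink_mem_arc prev_source_not_mem_arc source_mem_arc sink_not_mem_arc by auto
  moreover have "I \<noteq> J"
    using IJ \<open>a \<noteq> b\<close> by simp
  ultimately show False
    using admissible_pairD[OF adm I J] eq by blast
qed

text \<open>An inclusion-minimal arc \<open>[a,b)\<close> has an endpoint used by no other arc: otherwise the other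
  arcs at \<open>a\<close> and \<open>b\<close> must be some \<open>[a,c) \<supset> [a,b)\<close> and \<open>[d,b) \<supset> [a,b)\<close>, which overlap without
  being nested.\<close>
lemma admissible_has_unshared_endpoint:
  assumes adm: "admissible lab T" and "T \<noteq> {}"
  shows "\<exists>I\<in>T. \<exists>v\<in>{fst I, snd I}. \<forall>J\<in>T - {I}. v \<noteq> fst J \<and> v \<noteq> snd J"
proof (rule ccontr)
  assume shared: "\<not> ?thesis"
  have "finite T"
    using adm by (simp add: admissible_def)
  then obtain I where I: "I \<in> T" and minimal: "\<And>J. J \<in> T \<Longrightarrow> \<not> arc lab J \<subset> arc lab I"
    using finite_has_minimal[of "arc lab ` T"] \<open>T \<noteq> {}\<close> by blast
  have arc_subset: "arc lab I \<subseteq> arc lab J" if "J \<in> T" "J \<noteq> I" "x \<in> arc lab I" "x \<in> arc lab J" for J x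
    using admissible_pairD[OF adm I that(1)] that minimal by blast
  obtain a b where Iab: "I = (a, b)" by (cases I)
  have source_shared: "\<exists>J\<in>T - {I}. fst I = fst J \<or> fst I = snd J"
    and sink_shared: "\<exists>J\<in>T - {I}. snd I = fst J \<or> snd I = snd J"
    using shared I by blast+
  obtain J1 where J1: "J1 \<in> T" "J1 \<noteq> I" "fst J1 = a"
    using source_shared admissible_sink_ne_source[OF adm _ I] Iab by fastforce
  obtain J2 where J2: "J2 \<in> T" "J2 \<noteq> I" "snd J2 = b"
    using sink_shared admissible_sink_ne_source[OF adm I] Iab by fastforce
  obtain c d where J1ac: "J1 = (a, c)" and J2db: "J2 = (d, b)"
    using J1(3) J2(3) by (metis prod.collapse)
  have "a \<noteq> b" "a \<noteq> c" "d \<noteq> b"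
    using admissible_nondegenerate[OF adm I] admissible_nondegenerate[OF adm J1(1)]
      admissible_nondegenerate[OF adm J2(1)] Iab J1ac J2db by auto
  have "b \<noteq> c" "d \<noteq> a"
    using J1(2) J2(2) Iab J1ac J2db by auto
  have "arc lab I \<subseteq> arc lab J1"
    using arc_subset[OF J1(1,2)] source_mem_arc \<open>a \<noteq> b\<close> \<open>a \<noteq> c\<close> Iab J1ac by auto
  then have b_J1: "real (lab b) \<in> arc lab J1"
    using prev_sink_mem_arc[OF \<open>a \<noteq> b\<close>] mem_arc_of_prev \<open>b \<noteq> c\<close> Iab J1ac by auto
  have "arc lab I \<subseteq> arc lab J2"
    using arc_subset[OF J2(1,2)] prev_sink_mem_arc \<open>a \<noteq> b\<close> \<open>d \<noteq> b\<close> Iab J2db by auto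
  then have a_J2: "real (lab a) \<in> arc lab J2"
    using source_mem_arc[OF \<open>a \<noteq> b\<close>] Iab by auto
  then have "real (prev_lab a) \<in> arc lab J2 - arc lab J1"
    using prev_mem_arc \<open>d \<noteq> a\<close> prev_source_not_mem_arc J1ac J2db by auto
  moreover have "real (lab b) \<in> arc lab J1 - arc lab J2"
    using b_J1 sink_not_mem_arc J2db by auto
  moreover have "real (lab a) \<in> arc lab J1 \<inter> arc lab J2"
    using a_J2 source_mem_arc \<open>a \<noteq> c\<close> J1ac by auto
  moreover have "J1 \<noteq> J2"
    using \<open>d \<noteq> a\<close> J1ac J2db by simp
  ultimately show False
    using admissible_pairD[OF adm J1(1) J2(1)] by blast
qed

lemma admissible_root_vec_coeffs_eq_0:
  assumes "admissible lab T" and "(\<Sum>I\<in>T. c I *\<^sub>R root_vec I) = 0"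
  shows "\<forall>I\<in>T. c I = 0"
  using admissible_nondegenerate[OF assms(1)] _ assms(2)
proof (rule root_vec_coeffs_eq_0)
  fix S assume "S \<subseteq> T" "S \<noteq> {}"
  then show "\<exists>I\<in>S. \<exists>v\<in>{fst I, snd I}. \<forall>J\<in>S - {I}. v \<noteq> fst J \<and> v \<noteq> snd J"
    by (rule admissible_has_unshared_endpoint[OF admissible_subset[OF assms(1)]])
qed

end

theorem mainTheorem4:
  fixes lab :: "'n::finite \<Rightarrow> nat" and T :: "('n \<times> 'n) set"
  assumes "CARD('n) \<ge> 3"
    and "bij_betw lab UNIV {0..<CARD('n)}"
    and "admissible lab T"
  shows "inj_on root_vec T \<and> \<not> affine_dependent (root_vec ` T)
       \<and> aff_dim (convex hull (root_vec ` T)) = int (card T) - 1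
       \<and> convex hull (root_vec ` T) \<subseteq> rel_frontier Root
       \<and> inj_on phi (simplex_pts T)
       \<and> phi ` simplex_pts T \<subseteq> rel_frontier Root"
proof -
  interpret polygon_labelling lab
    using assms(2) by unfold_locales
  note adm = assms(3)
  note nondeg = admissible_nondegenerate[OF adm]
  note coeffs = admissible_root_vec_coeffs_eq_0[OF adm]
  have inj: "inj_on root_vec T" and "independent (root_vec ` T)"
    using independent_root_vecs[OF coeffs] by blast+
  then have indep: "\<not> affine_dependent (root_vec ` T)"
    using affine_dependent_imp_dependent by auto
  then have "aff_dim (convex hull (root_vec ` T)) = int (card T) - 1"
    using aff_dim_affine_independent[OF indep] card_image[OF inj] by (simp add: aff_dim_convex_hull)
  moreover have "convex hull (root_vec ` T) \<subseteq> rel_frontier Root"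
    using admissible_sink_ne_source[OF adm] by (rule convex_hull_root_vecs_subset_rel_frontier_Root)
  moreover have "phi ` simplex_pts T \<subseteq> convex hull (root_vec ` T)"
    using nondeg by (rule phi_simplex_pts_subset_convex_hull)
  moreover have "inj_on phi (simplex_pts T)"
    using nondeg coeffs by (rule inj_on_phi_simplex_pts)
  ultimately show ?thesis
    using inj indep by (meson order_trans)
qed

end
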